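(* Let $n\ge 3$ and let $(e_1,\dots,e_n)$ be a basis of unit vectors of an $n$-dimensional real inner product space $V$. Then the following are equivalent: (a) For every $1\le k\le n-1$ and every $v\in T_{n-k}$, $P_kv=M_kv$. (b) For every $1\le k\le n-1$, the vector $P_ke_{k+1}$ is parallel to $e_k$ (i.e. a scalar multiple of $e_k$). (c) For every $2\le k\le n-1$, the subspaces $M_k'S_{k-1}$ and $M_k'T_{n-k}$ are orthogonal. (d) For every $1\le k\le n-1$ and every $v\in S_k$, $Q_{n-k}v=M_{k+1}v$. (e) For every $1\le k\le n-1$, the vector $Q_{n-k}e_k$ is parallel to $e_{k+1}$.
   Context: For $k=0,\dots,n$, $S_k=\mathrm{span}\{e_1,\dots,e_k\}$ and $T_k=\mathrm{span}\{e_{n-k+1},\dots,e_n\}$ (so $T_{n-k}=\mathrm{span}\{e_{k+1},\dots,e_n\}$, and $S_0=T_0=\{0\}$). $P_k$ and $Q_k$ denote the orthogonal projections onto $S_k$ and $T_k$ respectively. $M_k$ denotes the orthogonal projection onto the line spanned by $e_k$ (which equals $S_k\cap T_{n-k+1}$), and $M_k'=I-M_k$. *)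

theory Defs
  imports "HOL-Analysis.Analysis"
begin

definition orth_proj :: "'a::euclidean_space set \<Rightarrow> 'a \<Rightarrow> 'a" where
  "orth_proj U v = (THE w. w \<in> U \<and> (\<forall>u\<in>U. orthogonal (v - w) u))"

definition Ssp :: "(nat \<Rightarrow> 'a::euclidean_space) \<Rightarrow> nat \<Rightarrow> 'a set" where
  "Ssp e k = span (e ` {1..k})"

definition Tsp :: "(nat \<Rightarrow> 'a::euclidean_space) \<Rightarrow> nat \<Rightarrow> nat \<Rightarrow> 'a set" where
  "Tsp e n k = span (e ` {n - k + 1..n})"

definition Pk :: "(nat \<Rightarrow> 'a::euclidean_space) \<Rightarrow> nat \<Rightarrow> 'a \<Rightarrow> 'a" where
  "Pk e k = orth_proj (Ssp e k)"

definition Qk :: "(nat \<Rightarrow> 'a::euclidean_space) \<Rightarrow> nat \<Rightarrow> nat \<Rightarrow> 'a \<Rightarrow> 'a" where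
  "Qk e n k = orth_proj (Tsp e n k)"

definition Mk :: "(nat \<Rightarrow> 'a::euclidean_space) \<Rightarrow> nat \<Rightarrow> 'a \<Rightarrow> 'a" where
  "Mk e k = orth_proj (span {e k})"

definition Mk' :: "(nat \<Rightarrow> 'a::euclidean_space) \<Rightarrow> nat \<Rightarrow> 'a \<Rightarrow> 'a" where
  "Mk' e k v = v - Mk e k v"

end

theory Submission
  imports Defs
begin

text \<open>Write \<open>g i j = e i \<bullet> e j\<close>. For a unit vector \<open>a \<in> U\<close>, the projection onto \<open>U\<close> of \<open>v\<close> is
  \<open>(v \<bullet> a) a\<close> exactly when \<open>v \<bullet> u = (v \<bullet> a)(u \<bullet> a)\<close> for all \<open>u \<in> U\<close>. Hence each of (a)--(e)
  says that, for every \<open>k\<close>, the inner product factors through \<open>e k\<close> or \<open>e (k+1)\<close> on a pair of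
  spans; by bilinearity it suffices to check this on the spanning vectors, which turns each
  condition into a family of relations \<open>g i j = g i m * g j m\<close>. Conditions (a), (c), (d) cut the
  chain \<open>1, \<dots>, n\<close> at some point and are directly equivalent to the relation for all
  \<open>i < m < j\<close>; the adjacent conditions (b), (e) imply it by induction along the chain.\<close>

lemma orth_proj_eq_iff:
  fixes U :: "'a::euclidean_space set"
  assumes "subspace U"
  shows "orth_proj U v = w \<longleftrightarrow> w \<in> U \<and> (\<forall>u\<in>U. (v - w) \<bullet> u = 0)"
proof -
  have unique: "w1 = w2"
    if "w1 \<in> U" "\<forall>u\<in>U. (v - w1) \<bullet> u = 0" "w2 \<in> U" "\<forall>u\<in>U. (v - w2) \<bullet> u = 0" for w1 w2
  proof -
    have "w1 - w2 \<in> U" using that assms by (simp add: subspace_diff)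
    then have "(v - w2) \<bullet> (w1 - w2) - (v - w1) \<bullet> (w1 - w2) = 0" using that by simp
    then have "(w1 - w2) \<bullet> (w1 - w2) = 0" by (simp add: inner_diff_left)
    then show ?thesis by simp
  qed
  obtain y z where "y \<in> span U" "\<And>u. u \<in> span U \<Longrightarrow> orthogonal z u" "v = y + z"
    using orthogonal_subspace_decomp_exists by blast
  moreover have "span U = U" using assms by (simp add: span_eq_iff)
  ultimately have "y \<in> U \<and> (\<forall>u\<in>U. (v - y) \<bullet> u = 0)"
    by (simp add: orthogonal_def)
  moreover from this unique have "orth_proj U v = y"
    unfolding orth_proj_def orthogonal_def by (intro the_equality) blast+
  ultimately show ?thesis using unique by blast
qed

lemma orth_proj_eq_component_iff:
  assumes "subspace U" "a \<in> U" "norm a = 1"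
  shows "orth_proj U v = (v \<bullet> a) *\<^sub>R a \<longleftrightarrow> (\<forall>u\<in>U. v \<bullet> u = (v \<bullet> a) * (u \<bullet> a))"
  using assms
  by (simp add: orth_proj_eq_iff subspace_scale inner_diff_left inner_diff_right inner_commute)

lemma orth_proj_line:
  assumes "norm a = 1"
  shows "orth_proj (span {a}) v = (v \<bullet> a) *\<^sub>R a"
proof -
  have "subspace (span {a})" "a \<in> span {a}" by (auto intro: span_base)
  moreover have "a \<bullet> a = 1" using assms by (simp add: norm_eq_1)
  ultimately show ?thesis
    using assms by (auto simp: orth_proj_eq_component_iff span_singleton)
qed

lemma orth_proj_parallel_iff:
  assumes "subspace U" "a \<in> U" "norm a = 1"
  shows "(\<exists>c. orth_proj U v = c *\<^sub>R a) \<longleftrightarrow> orth_proj U v = (v \<bullet> a) *\<^sub>R a"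
proof
  assume "\<exists>c. orth_proj U v = c *\<^sub>R a"
  then obtain c where c: "orth_proj U v = c *\<^sub>R a" by blast
  then have "(v - c *\<^sub>R a) \<bullet> a = 0" using assms by (simp add: orth_proj_eq_iff)
  then have "c = v \<bullet> a" using assms by (simp add: inner_diff_left norm_eq_1)
  then show "orth_proj U v = (v \<bullet> a) *\<^sub>R a" using c by simp
qed blast

definition inner_factors_through :: "'a::real_inner \<Rightarrow> 'a set \<Rightarrow> 'a set \<Rightarrow> bool" where
  "inner_factors_through a X Y \<longleftrightarrow> (\<forall>x\<in>X. \<forall>y\<in>Y. x \<bullet> y = (x \<bullet> a) * (y \<bullet> a))"

lemma inner_factors_through_commute:
  "inner_factors_through a X Y \<longleftrightarrow> inner_factors_through a Y X"
  unfolding inner_factors_through_def by (force simp: inner_commute mult.commute)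

lemma inner_factors_through_span_right:
  "inner_factors_through a X (span Y) \<longleftrightarrow> inner_factors_through a X Y"
proof
  assume "inner_factors_through a X Y"
  then show "inner_factors_through a X (span Y)"
    unfolding inner_factors_through_def
  proof (intro ballI)
    fix x y assume factors: "\<forall>x\<in>X. \<forall>y\<in>Y. x \<bullet> y = (x \<bullet> a) * (y \<bullet> a)"
      and "x \<in> X" "y \<in> span Y"
    have "subspace {y. x \<bullet> y = (x \<bullet> a) * (y \<bullet> a)}"
      by (auto simp: subspace_def inner_add_left inner_add_right distrib_left)
    then show "x \<bullet> y = (x \<bullet> a) * (y \<bullet> a)"
      by (rule span_induct[OF \<open>y \<in> span Y\<close>]) (use factors \<open>x \<in> X\<close> in auto)
  qed
qed (auto simp: inner_factors_through_def span_base)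

lemma inner_factors_through_span:
  "inner_factors_through a (span X) (span Y) \<longleftrightarrow> inner_factors_through a X Y"
  by (metis inner_factors_through_commute inner_factors_through_span_right)

definition chain_factorizes :: "nat \<Rightarrow> (nat \<Rightarrow> nat \<Rightarrow> 'b::comm_monoid_mult) \<Rightarrow> bool" where
  "chain_factorizes n g \<longleftrightarrow> (\<forall>i k j. 1 \<le> i \<longrightarrow> i < k \<longrightarrow> k < j \<longrightarrow> j \<le> n \<longrightarrow> g i j = g i k * g j k)"

lemma chain_factorizes_iff_inner_cuts:
  "chain_factorizes n g \<longleftrightarrow> (\<forall>k\<in>{2..n-1}. \<forall>i\<in>{1..k-1}. \<forall>j\<in>{k+1..n}. g i j = g i k * g j k)"
  unfolding chain_factorizes_def by force

context
  fixes g :: "nat \<Rightarrow> nat \<Rightarrow> 'b::comm_monoid_mult" and n :: nat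
  assumes sym: "\<And>i j. g i j = g j i"
    and diag: "\<forall>k\<in>{1..n}. g k k = 1"
begin

lemma chain_factorizes_iff_left_cuts:
  "chain_factorizes n g \<longleftrightarrow> (\<forall>k\<in>{1..n-1}. \<forall>i\<in>{1..k}. \<forall>j\<in>{k+1..n}. g i j = g i k * g j k)"
proof
  assume chain: "chain_factorizes n g"
  show "\<forall>k\<in>{1..n-1}. \<forall>i\<in>{1..k}. \<forall>j\<in>{k+1..n}. g i j = g i k * g j k"
  proof (intro ballI)
    fix k i j assume "k \<in> {1..n-1}" "i \<in> {1..k}" "j \<in> {k+1..n}"
    then show "g i j = g i k * g j k"
      using chain diag[rule_format, of k] sym[of k j] unfolding chain_factorizes_def
      by (cases "i = k") auto
  qed
next
  assume cuts: "\<forall>k\<in>{1..n-1}. \<forall>i\<in>{1..k}. \<forall>j\<in>{k+1..n}. g i j = g i k * g j k"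
  show "chain_factorizes n g" unfolding chain_factorizes_def
  proof (intro allI impI)
    fix i k j assume "1 \<le> i" "i < k" "k < j" "j \<le> n"
    then show "g i j = g i k * g j k"
      using cuts[rule_format, of k i j] by simp
  qed
qed

lemma chain_factorizes_iff_right_cuts:
  "chain_factorizes n g \<longleftrightarrow> (\<forall>k\<in>{1..n-1}. \<forall>i\<in>{1..k}. \<forall>j\<in>{k+1..n}. g i j = g i (k+1) * g j (k+1))"
proof
  assume chain: "chain_factorizes n g"
  show "\<forall>k\<in>{1..n-1}. \<forall>i\<in>{1..k}. \<forall>j\<in>{k+1..n}. g i j = g i (k+1) * g j (k+1)"
  proof (intro ballI)
    fix k i j assume "k \<in> {1..n-1}" "i \<in> {1..k}" "j \<in> {k+1..n}"
    then show "g i j = g i (k+1) * g j (k+1)"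
      using chain diag[rule_format, of "k+1"] unfolding chain_factorizes_def
      by (cases "j = k+1") auto
  qed
next
  assume cuts: "\<forall>k\<in>{1..n-1}. \<forall>i\<in>{1..k}. \<forall>j\<in>{k+1..n}. g i j = g i (k+1) * g j (k+1)"
  show "chain_factorizes n g" unfolding chain_factorizes_def
  proof (intro allI impI)
    fix i k j assume "1 \<le> i" "i < k" "k < j" "j \<le> n"
    then show "g i j = g i k * g j k"
      using cuts[rule_format, of "k - 1" i j] by simp
  qed
qed

lemma chain_factorizes_iff_through_predecessor:
  "chain_factorizes n g \<longleftrightarrow> (\<forall>k\<in>{1..n-1}. \<forall>i\<in>{1..k}. g i (k+1) = g i k * g (k+1) k)"
proof
  assume chain: "chain_factorizes n g"
  show "\<forall>k\<in>{1..n-1}. \<forall>i\<in>{1..k}. g i (k+1) = g i k * g (k+1) k"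
  proof (intro ballI)
    fix k i assume "k \<in> {1..n-1}" "i \<in> {1..k}"
    then show "g i (k+1) = g i k * g (k+1) k"
      using chain diag[rule_format, of k] sym[of k "k+1"] unfolding chain_factorizes_def
      by (cases "i = k") auto
  qed
next
  assume adjacent: "\<forall>k\<in>{1..n-1}. \<forall>i\<in>{1..k}. g i (k+1) = g i k * g (k+1) k"
  show "chain_factorizes n g" unfolding chain_factorizes_def
  proof (intro allI impI)
    fix i k j assume "1 \<le> i" "i < k" "k < j" "j \<le> n"
    have "k \<le> j" using \<open>k < j\<close> by simp
    then have "j \<le> n \<longrightarrow> g i j = g i k * g j k"
    proof (induction rule: dec_induct)
      case base
      show ?case using diag[rule_format, of k] \<open>1 \<le> i\<close> \<open>i < k\<close> by simp
    next
      case (step m)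
      show ?case
      proof
        assume "Suc m \<le> n"
        then have i_step: "g i (m+1) = g i m * g (m+1) m"
          and k_step: "g k (m+1) = g k m * g (m+1) m"
          using adjacent[rule_format, of m i] adjacent[rule_format, of m k] step.hyps \<open>1 \<le> i\<close> \<open>i < k\<close>
          by auto
        have "g i (m+1) = g i k * (g k m * g (m+1) m)"
          using i_step step.IH \<open>Suc m \<le> n\<close> sym[of m k] by (simp add: mult.assoc)
        also have "\<dots> = g i k * g (Suc m) k"
          using k_step sym[of k "m+1"] by simp
        finally show "g i (Suc m) = g i k * g (Suc m) k" by simp
      qed
    qed
    then show "g i j = g i k * g j k" using \<open>j \<le> n\<close> by blast
  qed
qed

lemma chain_factorizes_iff_through_successor:
  "chain_factorizes n g \<longleftrightarrow> (\<forall>k\<in>{1..n-1}. \<forall>j\<in>{k+1..n}. g k j = g k (k+1) * g j (k+1))"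
proof
  assume chain: "chain_factorizes n g"
  show "\<forall>k\<in>{1..n-1}. \<forall>j\<in>{k+1..n}. g k j = g k (k+1) * g j (k+1)"
  proof (intro ballI)
    fix k j assume "k \<in> {1..n-1}" "j \<in> {k+1..n}"
    then show "g k j = g k (k+1) * g j (k+1)"
      using chain diag[rule_format, of "k+1"] unfolding chain_factorizes_def
      by (cases "j = k+1") auto
  qed
next
  assume adjacent: "\<forall>k\<in>{1..n-1}. \<forall>j\<in>{k+1..n}. g k j = g k (k+1) * g j (k+1)"
  show "chain_factorizes n g" unfolding chain_factorizes_def
  proof (intro allI impI)
    fix i k j assume "1 \<le> i" "i < k" "k < j" "j \<le> n"
    have "i \<le> k" using \<open>i < k\<close> by simp
    then have "1 \<le> i \<longrightarrow> g i j = g i k * g j k"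
    proof (induction rule: inc_induct)
      case base
      show ?case using diag[rule_format, of k] sym[of k j] \<open>k < j\<close> \<open>j \<le> n\<close> by simp
    next
      case (step m)
      show ?case
      proof
        assume "1 \<le> m"
        then have j_step: "g m j = g m (m+1) * g j (m+1)"
          and k_step: "g m k = g m (m+1) * g k (m+1)"
          using adjacent[rule_format, of m j] adjacent[rule_format, of m k] step.hyps \<open>k < j\<close> \<open>j \<le> n\<close>
          by auto
        have "g m j = g m (m+1) * (g (m+1) k * g j k)"
          using j_step step.IH sym[of j "m+1"] by simp
        also have "\<dots> = g m k * g j k"
          using k_step sym[of k "m+1"] by (simp add: mult.assoc)
        finally show "g m j = g m k * g j k" .
      qed
    qed
    then show "g i j = g i k * g j k" using \<open>1 \<le> i\<close> by blast
  qed
qed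

end

lemma Tsp_eq:
  assumes "k \<le> n"
  shows "Tsp e n (n - k) = span (e ` {k+1..n})"
  using assms unfolding Tsp_def by (simp add: Suc_diff_le)

lemma Mk_eq:
  assumes "norm (e k) = 1"
  shows "Mk e k v = (v \<bullet> e k) *\<^sub>R e k"
  unfolding Mk_def using assms by (rule orth_proj_line)

lemma inner_Mk':
  assumes "norm (e k) = 1"
  shows "Mk' e k x \<bullet> Mk' e k y = x \<bullet> y - (x \<bullet> e k) * (y \<bullet> e k)"
  using assms unfolding Mk'_def Mk_eq[of e k, OF assms]
  by (simp add: inner_diff_left inner_diff_right inner_commute norm_eq_1 algebra_simps)

context
  fixes e :: "nat \<Rightarrow> 'a::euclidean_space" and n k :: nat
begin

lemma condition_a_iff:
  assumes "norm (e k) = 1" "1 \<le> k" "k \<le> n"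
  shows "(\<forall>v\<in>Tsp e n (n - k). Pk e k v = Mk e k v)
    \<longleftrightarrow> inner_factors_through (e k) (e ` {1..k}) (e ` {k+1..n})"
proof -
  have "e k \<in> Ssp e k" using assms unfolding Ssp_def by (simp add: span_base)
  then have "(\<forall>v\<in>Tsp e n (n - k). Pk e k v = Mk e k v)
      \<longleftrightarrow> inner_factors_through (e k) (Tsp e n (n - k)) (Ssp e k)"
    unfolding Pk_def Mk_eq[of e k, OF assms(1)] inner_factors_through_def
    using assms(1) by (simp add: orth_proj_eq_component_iff Ssp_def)
  then show ?thesis
    using assms by (simp add: Tsp_eq Ssp_def inner_factors_through_span)
      (rule inner_factors_through_commute)
qed

lemma condition_b_iff:
  assumes "norm (e k) = 1" "1 \<le> k"
  shows "(\<exists>c. Pk e k (e (k+1)) = c *\<^sub>R e k)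
    \<longleftrightarrow> inner_factors_through (e k) (e ` {1..k}) {e (k+1)}"
proof -
  have "subspace (Ssp e k)" "e k \<in> Ssp e k" using assms unfolding Ssp_def by (auto simp: span_base)
  then have "(\<exists>c. Pk e k (e (k+1)) = c *\<^sub>R e k) \<longleftrightarrow> inner_factors_through (e k) {e (k+1)} (Ssp e k)"
    unfolding Pk_def inner_factors_through_def
    using assms(1) by (simp add: orth_proj_parallel_iff orth_proj_eq_component_iff)
  then show ?thesis
    by (simp add: Ssp_def inner_factors_through_span_right inner_factors_through_commute[of _ "{_}"])
qed

lemma condition_c_iff:
  assumes "norm (e k) = 1" "k \<le> n"
  shows "(\<forall>x\<in>Ssp e (k - 1). \<forall>y\<in>Tsp e n (n - k). orthogonal (Mk' e k x) (Mk' e k y))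
    \<longleftrightarrow> inner_factors_through (e k) (e ` {1..k-1}) (e ` {k+1..n})"
proof -
  have "(\<forall>x\<in>Ssp e (k - 1). \<forall>y\<in>Tsp e n (n - k). orthogonal (Mk' e k x) (Mk' e k y))
      \<longleftrightarrow> inner_factors_through (e k) (Ssp e (k - 1)) (Tsp e n (n - k))"
    by (simp add: orthogonal_def inner_Mk'[of e k, OF assms(1)] inner_factors_through_def)
  then show ?thesis
    using assms by (simp add: Tsp_eq Ssp_def inner_factors_through_span)
qed

lemma condition_d_iff:
  assumes "norm (e (k+1)) = 1" "k + 1 \<le> n"
  shows "(\<forall>v\<in>Ssp e k. Qk e n (n - k) v = Mk e (k+1) v)
    \<longleftrightarrow> inner_factors_through (e (k+1)) (e ` {1..k}) (e ` {k+1..n})"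
proof -
  have "subspace (Tsp e n (n - k))" "e (k+1) \<in> Tsp e n (n - k)"
    using assms by (auto simp: Tsp_eq span_base)
  then have "(\<forall>v\<in>Ssp e k. Qk e n (n - k) v = Mk e (k+1) v)
      \<longleftrightarrow> inner_factors_through (e (k+1)) (Ssp e k) (Tsp e n (n - k))"
    unfolding Qk_def Mk_eq[of e "k+1", OF assms(1)] inner_factors_through_def
    using assms(1) by (simp add: orth_proj_eq_component_iff)
  then show ?thesis
    using assms by (simp add: Tsp_eq Ssp_def inner_factors_through_span)
qed

lemma condition_e_iff:
  assumes "norm (e (k+1)) = 1" "k + 1 \<le> n"
  shows "(\<exists>c. Qk e n (n - k) (e k) = c *\<^sub>R e (k+1))
    \<longleftrightarrow> inner_factors_through (e (k+1)) {e k} (e ` {k+1..n})"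
proof -
  have "subspace (Tsp e n (n - k))" "e (k+1) \<in> Tsp e n (n - k)"
    using assms by (auto simp: Tsp_eq span_base)
  then have "(\<exists>c. Qk e n (n - k) (e k) = c *\<^sub>R e (k+1))
      \<longleftrightarrow> inner_factors_through (e (k+1)) {e k} (Tsp e n (n - k))"
    unfolding Qk_def inner_factors_through_def
    using assms(1) by (simp add: orth_proj_parallel_iff orth_proj_eq_component_iff)
  then show ?thesis
    using assms by (simp add: Tsp_eq inner_factors_through_span_right)
qed

end

theorem proposition3:
  fixes e :: "nat \<Rightarrow> 'a::euclidean_space" and n :: nat
  assumes "n \<ge> 3"
    and "DIM('a) = n"
    and "inj_on e {1..n}"
    and "independent (e ` {1..n})"
    and "span (e ` {1..n}) = UNIV"
    and "\<And>i. i \<in> {1..n} \<Longrightarrow> norm (e i) = 1"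
  defines "A \<equiv> (\<forall>k\<in>{1..n-1}. \<forall>v\<in>Tsp e n (n - k). Pk e k v = Mk e k v)"
    and "B \<equiv> (\<forall>k\<in>{1..n-1}. \<exists>c::real. Pk e k (e (k+1)) = c *\<^sub>R e k)"
    and "C \<equiv> (\<forall>k\<in>{2..n-1}. \<forall>x\<in>Ssp e (k - 1). \<forall>y\<in>Tsp e n (n - k).
               orthogonal (Mk' e k x) (Mk' e k y))"
    and "D \<equiv> (\<forall>k\<in>{1..n-1}. \<forall>v\<in>Ssp e k. Qk e n (n - k) v = Mk e (k+1) v)"
    and "E \<equiv> (\<forall>k\<in>{1..n-1}. \<exists>c::real. Qk e n (n - k) (e k) = c *\<^sub>R e (k+1))"
  shows "(A \<longleftrightarrow> B) \<and> (A \<longleftrightarrow> C) \<and> (A \<longleftrightarrow> D) \<and> (A \<longleftrightarrow> E)"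
proof -
  have unit: "norm (e k) = 1" if "k \<in> {1..n}" for k using assms(6) that .
  define g where "g i j = e i \<bullet> e j" for i j
  have sym: "g i j = g j i" for i j by (simp add: g_def inner_commute)
  have diag: "\<forall>k\<in>{1..n}. g k k = 1" using unit by (simp add: g_def norm_eq_1)
  have "A \<longleftrightarrow> (\<forall>k\<in>{1..n-1}. inner_factors_through (e k) (e ` {1..k}) (e ` {k+1..n}))"
    unfolding A_def using unit by (intro ball_cong refl condition_a_iff) auto
  then have A: "A \<longleftrightarrow> chain_factorizes n g"
    unfolding chain_factorizes_iff_left_cuts[where g = g, OF sym diag]
    by (simp add: inner_factors_through_def g_def)
  have "B \<longleftrightarrow> (\<forall>k\<in>{1..n-1}. inner_factors_through (e k) (e ` {1..k}) {e (k+1)})"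
    unfolding B_def using unit by (intro ball_cong refl condition_b_iff) auto
  then have B: "B \<longleftrightarrow> chain_factorizes n g"
    unfolding chain_factorizes_iff_through_predecessor[where g = g, OF sym diag]
    by (simp add: inner_factors_through_def g_def)
  have "C \<longleftrightarrow> (\<forall>k\<in>{2..n-1}. inner_factors_through (e k) (e ` {1..k-1}) (e ` {k+1..n}))"
    unfolding C_def using unit by (intro ball_cong refl condition_c_iff) auto
  then have C: "C \<longleftrightarrow> chain_factorizes n g"
    unfolding chain_factorizes_iff_inner_cuts
    by (simp add: inner_factors_through_def g_def)
  have "D \<longleftrightarrow> (\<forall>k\<in>{1..n-1}. inner_factors_through (e (k+1)) (e ` {1..k}) (e ` {k+1..n}))"
    unfolding D_def using unit by (intro ball_cong refl condition_d_iff) auto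
  then have D: "D \<longleftrightarrow> chain_factorizes n g"
    unfolding chain_factorizes_iff_right_cuts[where g = g, OF sym diag]
    by (simp add: inner_factors_through_def g_def)
  have "E \<longleftrightarrow> (\<forall>k\<in>{1..n-1}. inner_factors_through (e (k+1)) {e k} (e ` {k+1..n}))"
    unfolding E_def using unit by (intro ball_cong refl condition_e_iff) auto
  then have E: "E \<longleftrightarrow> chain_factorizes n g"
    unfolding chain_factorizes_iff_through_successor[where g = g, OF sym diag]
    by (simp add: inner_factors_through_def g_def)
  show ?thesis using A B C D E by blast
qed

end
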